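(* The large deviation functions of the tracer position have the following asymptotics as $|\xi|\to\infty$: $$\phi_a(\xi)\simeq\rho|\xi|,\qquad \phi_q(\xi)\simeq\frac{\rho}{3\sigma^2}|\xi|^3 .$$ Here $\simeq$ means the ratio tends to $1$.
   Context: System: Brownian point particles on $\mathbb{R}$ with hard-core repulsion. Free single-particle propagator: $g(z,t\mid y,0)=(\pi\sigma^2 t)^{-1/2}\exp[-(z-y)^2/(\sigma^2 t)]$. The tracer starts at the origin. The other particles' initial positions form a Poisson point process of intensity $\rho>0$. $\phi_a$ is the annealed large deviation function of the tracer position: $$\phi_a(\xi)=\frac{\rho\sigma}{2}\big[\sqrt{h(\xi/\sigma)}-\sqrt{h(-\xi/\sigma)}\big]^2,\qquad h(\xi)=\int_\xi^\infty\operatorname{erfc}(\eta)\,d\eta .$$ $\phi_q$ is the quenched large deviation function, given parametrically by $$\phi_q(\xi)=\rho B\xi-\rho\sigma I(B),\qquad \xi=\sigma I'(B),$$ $$I(B)=\int_0^\infty\ln[1+\sinh^2(B/2)\operatorname{erfc}(\eta)\operatorname{erfc}(-\eta)]\,d\eta,$$ and extended to negative $\xi$ by $\phi_q(-\xi)=\phi_q(\xi)$. $\operatorname{erfc}(x)=\frac{2}{\sqrt\pi}\int_x^\infty e^{-u^2}du$. *)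

theory Defs
  imports "HOL-Analysis.Analysis"
begin

definition erfc :: "real \<Rightarrow> real" where
  "erfc x = 2 / sqrt pi * integral {x..} (\<lambda>u. exp (- (u^2)))"

definition hfun :: "real \<Rightarrow> real" where
  "hfun \<xi> = integral {\<xi>..} erfc"

definition phi_a :: "real \<Rightarrow> real \<Rightarrow> real \<Rightarrow> real" where
  "phi_a \<rho> \<sigma> \<xi> = \<rho> * \<sigma> / 2 * (sqrt (hfun (\<xi> / \<sigma>)) - sqrt (hfun (- \<xi> / \<sigma>)))^2"

definition Ifun :: "real \<Rightarrow> real" where
  "Ifun B = integral {0..} (\<lambda>\<eta>. ln (1 + (sinh (B / 2))^2 * erfc \<eta> * erfc (- \<eta>)))"

definition phi_q :: "real \<Rightarrow> real \<Rightarrow> real \<Rightarrow> real" where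
  "phi_q \<rho> \<sigma> \<xi> =
     (let B = (THE B. B \<ge> 0 \<and> \<sigma> * deriv Ifun B = \<bar>\<xi>\<bar>)
      in \<rho> * B * \<bar>\<xi>\<bar> - \<rho> * \<sigma> * Ifun B)"

end

theory Submission
  imports Defs "HOL-Probability.Probability" "HOL-Real_Asymp.Real_Asymp"
begin

text \<open>
  Annealed case: integrating erfc by parts gives the closed form
  h(x) = exp(-x^2)/sqrt pi - x erfc x, hence h(-x) = 2x + h(x), and with x = |xi|/sigma
  the ratio phi_a(xi)/(rho |xi|) equals (sqrt(1 + e) - sqrt e)^2 for e = h(x)/(2x), which
  tends to 0.

  Quenched case: I'(B) is the integral over eta \<ge> 0 of
  c sinh(B/2) cosh(B/2) / (1 + c sinh(B/2)^2) with c = erfc eta erfc(-eta), a weight that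
  decays like exp(-eta^2). The integrand is close to tanh(B/2) ~ 1 as long as c exp B is
  large, i.e. for eta below about sqrt B, and negligible beyond, so I'(B) ~ sqrt B and, by
  l'Hospital, I(B) ~ (2/3) B^(3/2). Since I' is strictly increasing from 0 to infinity, the
  parameter B with sigma I'(B) = |xi| is well defined and tends to infinity with |xi|, and then
  phi_q(xi) = rho (B |xi| - sigma I(B)) ~ (rho sigma / 3) B^(3/2) ~ rho |xi|^3 / (3 sigma^2).
\<close>

section \<open>The complementary error function\<close>

lemma gaussian_has_integral_Ici_0: "((\<lambda>u::real. exp (- (u^2))) has_integral (sqrt pi / 2)) {0..}"
proof -
  have "has_bochner_integral lborel (\<lambda>x. indicator {0..} x *\<^sub>R exp (- x\<^sup>2)) (sqrt pi / 2)"
    by (rule gaussian_moment_0)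
  then have i: "integrable lborel (\<lambda>x::real. indicator {0..} x *\<^sub>R exp (- x\<^sup>2))"
    and e: "integral\<^sup>L lborel (\<lambda>x::real. indicator {0..} x *\<^sub>R exp (- x\<^sup>2)) = sqrt pi / 2"
    by (auto simp: has_bochner_integral_iff)
  have "((\<lambda>x::real. indicator {0..} x *\<^sub>R exp (- x\<^sup>2)) has_integral (sqrt pi / 2)) UNIV"
    using has_integral_integral_lborel[OF i] unfolding e .
  moreover have "(\<lambda>x::real. indicator {0..} x *\<^sub>R exp (- x\<^sup>2)) = (\<lambda>x. if x \<in> {0..} then exp (- x\<^sup>2) else 0)"
    by (auto simp: indicator_def)
  ultimately show ?thesis
    by (simp only: has_integral_restrict_UNIV)
qed

lemma continuous_dominated_integrable_on:
  fixes f g :: "real \<Rightarrow> real"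
  assumes "closed S" "continuous_on S f" "g integrable_on S" "\<And>x. x \<in> S \<Longrightarrow> \<bar>f x\<bar> \<le> g x"
  shows "f integrable_on S"
proof -
  have S: "S \<in> sets lebesgue" using assms(1) by (simp add: borel_closed sets_completionI_sets)
  have "f absolutely_integrable_on S"
    by (rule measurable_bounded_by_integrable_imp_absolutely_integrable[OF
         continuous_imp_measurable_on_sets_lebesgue[OF assms(2) S] S assms(3)]) (use assms(4) in auto)
  then show ?thesis using absolutely_integrable_on_def by blast
qed

lemma scaled_exp_minus_integrable_on_Ici: "(\<lambda>x::real. C * exp (- x)) integrable_on {a..}"
  using integrable_on_mult_right[OF integrable_on_exp_minus_to_infinity[of 1 a]] by simp

lemma exp_minus_square_le: "exp (- ((u::real)^2)) \<le> exp (1/4) * exp (- u)"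
proof -
  have "0 \<le> (u - 1/2)^2" by simp
  then have "- (u^2) \<le> 1/4 + - u" by (simp add: power2_eq_square algebra_simps)
  then show ?thesis by (simp flip: exp_add)
qed

lemma continuous_on_gaussian: "continuous_on S (\<lambda>u::real. exp (- (u^2)))"
  by (intro continuous_intros)

lemma gaussian_integrable_on_Ici: "(\<lambda>u::real. exp (- (u^2))) integrable_on {a..}"
proof (rule continuous_dominated_integrable_on)
  show "(\<lambda>x. exp (1/4) * exp (- x)) integrable_on {a..}"
    by (rule scaled_exp_minus_integrable_on_Ici)
qed (auto simp: continuous_on_gaussian exp_minus_square_le)

lemma integral_Ici_split:
  fixes f :: "real \<Rightarrow> real"
  assumes "a \<le> x" "f integrable_on {a..x}" "f integrable_on {x..}"
  shows "integral {a..} f = integral {a..x} f + integral {x..} f"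
proof -
  have "{a..} = {a..x} \<union> {x..}" and "{a..x} \<inter> {x..} = {x}" using assms(1) by auto
  then show ?thesis using assms by (simp add: integral_Un)
qed

lemma erfc_has_real_derivative: "(erfc has_real_derivative - (2 / sqrt pi) * exp (- (x^2))) (at x)"
proof -
  let ?g = "\<lambda>u::real. exp (- (u^2))"
  define F where "F y = 2 / sqrt pi * (integral {x - 1..} ?g - integral {x - 1..y} ?g)" for y
  have "((\<lambda>y. integral {x - 1..y} ?g) has_real_derivative ?g x) (at x within {x - 1..x + 1})"
    by (rule integral_has_real_derivative[OF continuous_on_gaussian]) auto
  moreover have "at x within {x - 1..x + 1} = at x"
    by (rule at_within_interior) auto
  ultimately have d: "((\<lambda>y. integral {x - 1..y} ?g) has_real_derivative ?g x) (at x)" by simp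
  have "(F has_real_derivative - (2 / sqrt pi) * exp (- (x^2))) (at x)"
    unfolding F_def by (rule derivative_eq_intros d refl | simp)+
  then show ?thesis
  proof (rule has_field_derivative_transform_within[where d=1])
    fix y assume "dist y x < 1"
    then have "x - 1 \<le> y" by (auto simp: dist_real_def)
    then have "integral {x - 1..} ?g = integral {x - 1..y} ?g + integral {y..} ?g"
      by (intro integral_Ici_split gaussian_integrable_on_Ici
          integrable_continuous_interval[OF continuous_on_gaussian])
    then show "F y = erfc y" by (simp add: F_def erfc_def)
  qed auto
qed

lemma continuous_on_erfc: "continuous_on S erfc"
  using erfc_has_real_derivative by (meson DERIV_isCont continuous_at_imp_continuous_on)

lemma erfc_0: "erfc 0 = 1"
  using gaussian_has_integral_Ici_0 by (simp add: erfc_def integral_unique)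

lemma erfc_minus: "erfc (- x) = 2 - erfc x"
proof -
  have "((\<lambda>y. erfc (- y) + erfc y) has_real_derivative 0) (at y)" for y
  proof -
    have "((\<lambda>z. erfc (- z)) has_real_derivative - (2 / sqrt pi) * exp (- ((- y)^2)) * (- 1)) (at y)"
      by (rule DERIV_chain2[OF erfc_has_real_derivative]) (rule derivative_eq_intros refl | simp)+
    from DERIV_add[OF this erfc_has_real_derivative] show ?thesis by simp
  qed
  then have "erfc (- x) + erfc x = erfc (- 0) + erfc 0"
    using DERIV_isconst_all[of "\<lambda>y. erfc (- y) + erfc y"] by blast
  then show ?thesis by (simp add: erfc_0)
qed

lemma erfc_nonneg: "erfc x \<ge> 0"
  unfolding erfc_def by (intro mult_nonneg_nonneg integral_nonneg gaussian_integrable_on_Ici) auto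

lemma erfc_le_2: "erfc x \<le> 2"
  using erfc_nonneg[of "- x"] erfc_minus[of x] by simp

lemma erfc_le_1: assumes "x \<ge> 0" shows "erfc x \<le> 1"
proof -
  have "integral {x..} (\<lambda>u::real. exp (- (u^2))) \<le> integral {0..} (\<lambda>u::real. exp (- (u^2)))"
    by (rule integral_subset_le) (use assms in \<open>auto intro: gaussian_integrable_on_Ici\<close>)
  then have "erfc x \<le> erfc 0" unfolding erfc_def by (intro mult_left_mono) auto
  then show ?thesis by (simp add: erfc_0)
qed

lemma erfc_le_exp: assumes "u \<ge> 0" shows "erfc u \<le> 2 * exp (1/4) * exp (- (u^2))"
proof -
  let ?g = "\<lambda>t::real. exp (- (t^2))"
  define C where "C = exp (1/4) * exp (- (u^2)) * exp u"
  have C_int: "((\<lambda>t. C * exp (- 1 * t)) has_integral (C * (exp (- 1 * u) / 1))) {u..}"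
    by (intro has_integral_mult_right has_integral_exp_minus_to_infinity) simp
  have le: "?g t \<le> C * exp (- 1 * t)" if "t \<in> {u..}" for t
  proof -
    have "0 \<le> (t - u - 1/2)^2" and "u * (t - u) \<ge> 0" using that assms by simp_all
    then have "- (t^2) \<le> 1/4 + - (u^2) + u + - 1 * t"
      by (simp add: power2_eq_square algebra_simps)
    then have "exp (- (t^2)) \<le> exp (1/4 + - (u^2) + u + - 1 * t)" by simp
    also have "\<dots> = C * exp (- 1 * t)" unfolding C_def by (simp only: exp_add)
    finally show ?thesis .
  qed
  have "integral {u..} ?g \<le> integral {u..} (\<lambda>t. C * exp (- 1 * t))"
    by (rule integral_le[OF gaussian_integrable_on_Ici]) (use C_int le in auto)
  also have "\<dots> = exp (1/4) * exp (- (u^2))"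
    using integral_unique[OF C_int] by (simp add: C_def flip: exp_add)
  finally have "erfc u \<le> 2 / sqrt pi * (exp (1/4) * exp (- (u^2)))"
    unfolding erfc_def by (rule mult_left_mono) simp
  also have "\<dots> \<le> 2 * (exp (1/4) * exp (- (u^2)))"
    using pi_ge_two by (intro mult_right_mono) (auto simp: field_simps)
  finally show ?thesis by simp
qed

lemma erfc_ge_exp: assumes "u \<ge> 0" shows "erfc u \<ge> exp (- ((u + 1)^2))"
proof -
  let ?g = "\<lambda>t::real. exp (- (t^2))"
  have "integral {u..u+1} (\<lambda>t. exp (- ((u + 1)^2))) \<le> integral {u..u+1} ?g"
  proof (rule integral_le)
    fix t assume "t \<in> {u..u+1}"
    then have "t^2 \<le> (u + 1)^2" using assms by (intro power_mono) auto
    then show "exp (- ((u + 1)^2)) \<le> ?g t" by simp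
  qed (simp_all add: integrable_continuous_interval continuous_on_gaussian)
  also have "\<dots> \<le> integral {u..} ?g"
    by (rule integral_subset_le)
       (auto simp: gaussian_integrable_on_Ici integrable_continuous_interval continuous_on_gaussian)
  finally have i: "exp (- ((u + 1)^2)) \<le> integral {u..} ?g" by simp
  have "sqrt pi \<le> sqrt 4" using pi_less_4 by (intro real_sqrt_le_mono) simp
  then have "exp (- ((u + 1)^2)) \<le> 2 / sqrt pi * exp (- ((u + 1)^2))"
    by (simp add: field_simps)
  also have "\<dots> \<le> erfc u" unfolding erfc_def by (rule mult_left_mono[OF i]) simp
  finally show ?thesis .
qed

section \<open>The annealed large deviation function\<close>

lemma erfc_antiderivative:
  "((\<lambda>y. y * erfc y - exp (- (y^2)) / sqrt pi) has_real_derivative erfc x) (at x)"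
proof -
  define c where "c = 1 / sqrt pi"
  have d: "(erfc has_real_derivative - (2 * c) * exp (- (y^2))) (at y)" for y
    using erfc_has_real_derivative[of y] by (simp add: c_def)
  have "((\<lambda>y. y * erfc y - c * exp (- (y^2))) has_real_derivative
     1 * erfc x + x * (- (2 * c) * exp (- (x^2))) - c * (exp (- (x^2)) * (- (2 * x)))) (at x)"
    by (rule derivative_eq_intros d refl | simp)+
  then show ?thesis by (simp add: c_def algebra_simps)
qed

lemma tendsto_x_erfc_at_top: "((\<lambda>y. y * erfc y) \<longlongrightarrow> 0) at_top"
proof (rule tendsto_sandwich[where f="\<lambda>y. 0" and h="\<lambda>y. y * (2 * exp (1/4) * exp (- (y^2)))"])
  show "\<forall>\<^sub>F y in at_top. 0 \<le> y * erfc y"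
    using eventually_ge_at_top[of 0] by eventually_elim (simp add: erfc_nonneg)
  show "\<forall>\<^sub>F y in at_top. y * erfc y \<le> y * (2 * exp (1/4) * exp (- (y^2)))"
    using eventually_ge_at_top[of 0] by eventually_elim (simp add: erfc_le_exp mult_left_mono)
  show "((\<lambda>y::real. y * (2 * exp (1/4) * exp (- (y^2)))) \<longlongrightarrow> 0) at_top" by real_asymp
qed simp

lemma erfc_has_integral_Ici: "(erfc has_integral (exp (- (x^2)) / sqrt pi - x * erfc x)) {x..}"
proof -
  define P where "P y = y * erfc y - exp (- (y^2)) / sqrt pi" for y
  have "\<forall>\<^sub>F y in at_top. integral {x..y} erfc = P y - P x"
    using eventually_ge_at_top[of x]
  proof eventually_elim
    case (elim y)
    have "(erfc has_integral (P y - P x)) {x..y}"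
      unfolding P_def
      by (rule fundamental_theorem_of_calculus[OF elim])
         (auto intro!: has_field_derivative_at_within erfc_antiderivative
           simp: has_real_derivative_iff_has_vector_derivative[symmetric])
    then show ?case by (simp add: integral_unique)
  qed
  moreover have "((\<lambda>y. P y - P x) \<longlongrightarrow> (0 - 0) - P x) at_top"
    unfolding P_def by (intro tendsto_intros tendsto_x_erfc_at_top) real_asymp
  ultimately have "((\<lambda>y. integral {x..y} erfc) \<longlongrightarrow> - P x) at_top"
    by (simp add: tendsto_cong)
  then have "(erfc has_integral - P x) {x..}"
    by (intro has_integral_to_inf integrable_continuous_interval continuous_on_erfc erfc_nonneg)
  then show ?thesis by (simp add: P_def)
qed

lemma hfun_eq: "hfun x = exp (- (x^2)) / sqrt pi - x * erfc x"
  unfolding hfun_def using erfc_has_integral_Ici by (rule integral_unique)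

lemma hfun_nonneg: "hfun x \<ge> 0"
  unfolding hfun_def using erfc_has_integral_Ici[of x] erfc_nonneg
  by (intro integral_nonneg) (auto simp: has_integral_integrable)

lemma hfun_minus: "hfun (- x) = 2 * x + hfun x"
  by (simp add: hfun_eq erfc_minus algebra_simps)

lemma hfun_tendsto_0: "(hfun \<longlongrightarrow> 0) at_top"
proof -
  have "((\<lambda>x. exp (- (x^2)) / sqrt pi - x * erfc x) \<longlongrightarrow> 0 - 0) at_top"
    by (intro tendsto_intros tendsto_x_erfc_at_top) real_asymp
  then show ?thesis by (simp add: hfun_eq[abs_def])
qed

lemma phi_a_eq:
  assumes "\<sigma> > 0"
  shows "phi_a \<rho> \<sigma> \<xi> = \<rho> * \<sigma> / 2 * (sqrt (2 * (\<bar>\<xi>\<bar> / \<sigma>) + hfun (\<bar>\<xi>\<bar> / \<sigma>)) - sqrt (hfun (\<bar>\<xi>\<bar> / \<sigma>)))^2"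
proof (cases "\<xi> \<ge> 0")
  case True
  have "hfun (- \<xi> / \<sigma>) = 2 * (\<xi> / \<sigma>) + hfun (\<xi> / \<sigma>)" using hfun_minus[of "\<xi> / \<sigma>"] by simp
  then show ?thesis unfolding phi_a_def using True by (simp add: power2_commute)
next
  case False
  have "hfun (\<xi> / \<sigma>) = 2 * (- \<xi> / \<sigma>) + hfun (- \<xi> / \<sigma>)" using hfun_minus[of "- \<xi> / \<sigma>"] by simp
  then show ?thesis unfolding phi_a_def using False by simp
qed

lemma sqrt_diff_square_div:
  assumes "x > 0" "h \<ge> 0"
  shows "(sqrt (2 * x + h) - sqrt h)^2 / (2 * x) = (sqrt (1 + h / (2 * x)) - sqrt (h / (2 * x)))^2"
proof -
  have "1 + h / (2 * x) = (2 * x + h) / (2 * x)" using assms by (simp add: field_simps)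
  then have "sqrt (1 + h / (2 * x)) - sqrt (h / (2 * x)) = (sqrt (2 * x + h) - sqrt h) / sqrt (2 * x)"
    by (simp add: real_sqrt_divide diff_divide_distrib)
  then show ?thesis using assms by (simp add: power_divide)
qed

lemma phi_a_ratio_eq:
  assumes "\<sigma> > 0" "\<xi> \<noteq> 0" "\<rho> > 0"
  shows "phi_a \<rho> \<sigma> \<xi> / (\<rho> * \<bar>\<xi>\<bar>) =
    (sqrt (1 + hfun (\<bar>\<xi>\<bar> / \<sigma>) / (2 * (\<bar>\<xi>\<bar> / \<sigma>))) - sqrt (hfun (\<bar>\<xi>\<bar> / \<sigma>) / (2 * (\<bar>\<xi>\<bar> / \<sigma>))))^2"
proof -
  define x where "x = \<bar>\<xi>\<bar> / \<sigma>"
  have x: "x > 0" "\<bar>\<xi>\<bar> = \<sigma> * x" using assms by (simp_all add: x_def)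
  have "phi_a \<rho> \<sigma> \<xi> / (\<rho> * \<bar>\<xi>\<bar>) = (sqrt (2 * x + hfun x) - sqrt (hfun x))^2 / (2 * x)"
    unfolding phi_a_eq[OF assms(1)] x_def[symmetric] x(2) using assms x by (simp add: field_simps)
  then show ?thesis unfolding x_def[symmetric] using x by (simp add: sqrt_diff_square_div hfun_nonneg)
qed

lemma filterlim_abs_div_at_infinity:
  assumes "\<sigma> > (0::real)"
  shows "filterlim (\<lambda>\<xi>::real. \<bar>\<xi>\<bar> / \<sigma>) at_top at_infinity"
proof -
  have "filterlim (\<lambda>\<xi>::real. (1 / \<sigma>) * norm \<xi>) at_top at_infinity"
    by (rule filterlim_tendsto_pos_mult_at_top[OF tendsto_const _
          filterlim_at_infinity_imp_norm_at_top[OF filterlim_ident]]) (use assms in simp)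
  then show ?thesis by simp
qed

lemma eventually_nonzero_at_infinity: "\<forall>\<^sub>F \<xi> in at_infinity. (\<xi>::real) \<noteq> 0"
  unfolding eventually_at_infinity by (rule exI[of _ 1]) auto

lemma phi_a_asymptotics:
  assumes "\<rho> > 0" "\<sigma> > 0"
  shows "((\<lambda>\<xi>. phi_a \<rho> \<sigma> \<xi> / (\<rho> * \<bar>\<xi>\<bar>)) \<longlongrightarrow> 1) at_infinity"
proof -
  define R where "R x = (sqrt (1 + hfun x / (2 * x)) - sqrt (hfun x / (2 * x)))^2" for x
  have "((\<lambda>x. hfun x * (1 / (2 * x))) \<longlongrightarrow> 0 * 0) at_top"
    by (intro tendsto_mult hfun_tendsto_0) real_asymp
  then have "((\<lambda>x. hfun x / (2 * x)) \<longlongrightarrow> 0 * 0) at_top" by simp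
  then have "(R \<longlongrightarrow> (sqrt (1 + 0 * 0) - sqrt (0 * 0))^2) at_top"
    unfolding R_def by (intro tendsto_intros) simp
  then have "((\<lambda>\<xi>. R (\<bar>\<xi>\<bar> / \<sigma>)) \<longlongrightarrow> 1) at_infinity"
    by (intro filterlim_compose[OF _ filterlim_abs_div_at_infinity[OF assms(2)]]) simp
  moreover have "\<forall>\<^sub>F \<xi> in at_infinity. R (\<bar>\<xi>\<bar> / \<sigma>) = phi_a \<rho> \<sigma> \<xi> / (\<rho> * \<bar>\<xi>\<bar>)"
    using eventually_nonzero_at_infinity by eventually_elim (simp add: R_def phi_a_ratio_eq assms)
  ultimately show ?thesis by (rule Lim_transform_eventually)
qed

section \<open>The pointwise integrand of I and its derivatives in B\<close>

lemma cosh_le_exp_abs: "cosh (x::real) \<le> exp \<bar>x\<bar>"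
proof -
  have "cosh x = (exp x + exp (- x)) / 2" by (simp add: cosh_def)
  also have "\<dots> \<le> (exp \<bar>x\<bar> + exp \<bar>x\<bar>) / 2" by (intro divide_right_mono add_mono) auto
  finally show ?thesis by simp
qed

lemma abs_sinh_le_exp_abs: "\<bar>sinh (x::real)\<bar> \<le> exp \<bar>x\<bar>"
  using sinh_le_cosh_real[of x] sinh_le_cosh_real[of "- x"] cosh_le_exp_abs[of x] by simp

lemma exp_half_abs_square: "(exp (\<bar>B\<bar> / 2))^2 = exp \<bar>B::real\<bar>"
  by (simp add: power2_eq_square flip: exp_add)

lemma sinh_half_square_le: "(sinh (B / 2))^2 \<le> exp \<bar>B::real\<bar>"
proof -
  have "\<bar>sinh (B / 2)\<bar>^2 \<le> (exp (\<bar>B\<bar> / 2))^2"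
    using abs_sinh_le_exp_abs[of "B / 2"] by (intro power_mono) auto
  then show ?thesis by (simp add: exp_half_abs_square)
qed

lemma cosh_half_square_le: "(cosh (B / 2))^2 \<le> exp \<bar>B::real\<bar>"
proof -
  have "(cosh (B / 2))^2 \<le> (exp (\<bar>B\<bar> / 2))^2"
    using cosh_le_exp_abs[of "B / 2"] by (intro power_mono) auto
  then show ?thesis by (simp add: exp_half_abs_square)
qed

lemma cosh_half_square_ge: "(cosh (B / 2))^2 \<ge> exp B / 4" for B :: real
proof -
  have "exp (B / 2) / 2 \<le> cosh (B / 2)" by (simp add: cosh_def)
  then have "(exp (B / 2) / 2)^2 \<le> (cosh (B / 2))^2" by (intro power_mono) auto
  moreover have "(exp (B / 2) / 2)^2 = exp B / 4" by (simp add: power2_eq_square flip: exp_add)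
  ultimately show ?thesis by simp
qed

lemma abs_sinh_cosh_half_le: "\<bar>sinh (B / 2) * cosh (B / 2)\<bar> \<le> exp \<bar>B::real\<bar>"
proof -
  have "\<bar>sinh (B / 2) * cosh (B / 2)\<bar> \<le> exp (\<bar>B\<bar> / 2) * exp (\<bar>B\<bar> / 2)"
    unfolding abs_mult using abs_sinh_le_exp_abs[of "B / 2"] cosh_le_exp_abs[of "B / 2"]
    by (intro mult_mono) auto
  then show ?thesis by (simp flip: exp_add)
qed

text \<open>The integrand of I at eta is Iterm (erfc eta * erfc (- eta)) B.\<close>

definition Iterm :: "real \<Rightarrow> real \<Rightarrow> real" where
  "Iterm c B = ln (1 + (sinh (B / 2))^2 * c)"

definition Iterm' :: "real \<Rightarrow> real \<Rightarrow> real" where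
  "Iterm' c B = c * sinh (B / 2) * cosh (B / 2) / (1 + c * (sinh (B / 2))^2)"

definition Iterm'' :: "real \<Rightarrow> real \<Rightarrow> real" where
  "Iterm'' c B = c * (((cosh (B / 2))^2 + (sinh (B / 2))^2) * (1 + c * (sinh (B / 2))^2)
      - 2 * c * (sinh (B / 2))^2 * (cosh (B / 2))^2) / (2 * (1 + c * (sinh (B / 2))^2)^2)"

lemma Iterm_denominator_pos:
  fixes c B :: real
  shows "c \<ge> 0 \<Longrightarrow> 1 + (sinh (B / 2))^2 * c > 0" "c \<ge> 0 \<Longrightarrow> 1 + c * (sinh (B / 2))^2 > 0"
  by (simp_all add: add_pos_nonneg)

lemma Iterm_has_real_derivative: "c \<ge> 0 \<Longrightarrow> (Iterm c has_real_derivative Iterm' c B) (at B)"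
  unfolding Iterm_def Iterm'_def using Iterm_denominator_pos[of c B]
  by (auto intro!: derivative_eq_intros simp: field_simps power2_eq_square)

lemma Iterm'_has_real_derivative: "c \<ge> 0 \<Longrightarrow> (Iterm' c has_real_derivative Iterm'' c B) (at B)"
  unfolding Iterm'_def Iterm''_def using Iterm_denominator_pos[of c B]
  by (auto intro!: derivative_eq_intros simp: field_simps power2_eq_square)

lemma Iterm_bounds: assumes "0 \<le> c" shows "0 \<le> Iterm c B" "Iterm c B \<le> c * exp \<bar>B\<bar>"
proof -
  have c: "0 \<le> (sinh (B / 2))^2 * c" using assms by simp
  then show "0 \<le> Iterm c B" unfolding Iterm_def by simp
  have "Iterm c B \<le> (sinh (B / 2))^2 * c" unfolding Iterm_def by (rule ln_add_one_self_le_self[OF c])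
  also have "\<dots> \<le> exp \<bar>B\<bar> * c" using sinh_half_square_le[of B] assms by (intro mult_right_mono) auto
  finally show "Iterm c B \<le> c * exp \<bar>B\<bar>" by (simp add: mult.commute)
qed

lemma abs_Iterm'_le: assumes "0 \<le> c" shows "\<bar>Iterm' c B\<bar> \<le> c * exp \<bar>B\<bar>"
proof -
  define s where "s = sinh (B / 2)"
  define k where "k = cosh (B / 2)"
  have d: "1 + c * s^2 \<ge> 1" using assms by simp
  have "\<bar>Iterm' c B\<bar> = c * \<bar>s * k\<bar> / (1 + c * s^2)"
    unfolding Iterm'_def s_def[symmetric] k_def[symmetric] using assms d by (simp add: abs_mult)
  also have "\<dots> \<le> c * \<bar>s * k\<bar> / 1" using d assms by (intro divide_left_mono) (auto simp: add_pos_nonneg)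
  also have "\<dots> = c * \<bar>s * k\<bar>" by simp
  also have "\<dots> \<le> c * exp \<bar>B\<bar>"
    using abs_sinh_cosh_half_le[of B] assms unfolding s_def k_def by (intro mult_left_mono) auto
  finally show ?thesis .
qed

lemma Iterm'_nonneg: "0 \<le> c \<Longrightarrow> 0 \<le> B \<Longrightarrow> Iterm' c B \<ge> 0"
  unfolding Iterm'_def by (intro divide_nonneg_pos mult_nonneg_nonneg) (auto intro: add_pos_nonneg)

lemma Iterm'_le_1: assumes "0 \<le> c" "c \<le> 1" shows "Iterm' c B \<le> 1"
proof -
  define s where "s = sinh (B / 2)"
  define k where "k = cosh (B / 2)"
  have "2 * (s * k) \<le> s^2 + k^2" using sum_squares_ge_zero[of "s - k" 0]
    by (simp add: power2_eq_square algebra_simps)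
  then have "c * (2 * (s * k)) \<le> c * (s^2 + k^2)" using assms by (intro mult_left_mono) auto
  then have "c * s * k \<le> 1 + c * s^2"
    using cosh_square_eq[of "B / 2"] assms unfolding s_def k_def by (simp add: algebra_simps)
  moreover have "1 + c * s^2 > 0" using assms by (simp add: add_pos_nonneg)
  ultimately show ?thesis unfolding Iterm'_def s_def[symmetric] k_def[symmetric] by simp
qed

text \<open>Replacing sinh by cosh in the denominator gives Iterm' c B \<ge> tanh(B/2) (1 - 1/(1 + c cosh(B/2)^2)).\<close>

lemma Iterm'_ge_tanh:
  assumes "0 < c" "0 \<le> B" "0 < X" "X \<le> c * (cosh (B / 2))^2"
  shows "tanh (B / 2) - 1 / X \<le> Iterm' c B"
proof -
  define s where "s = sinh (B / 2)"
  define k where "k = cosh (B / 2)"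
  have k1: "k \<ge> 1" unfolding k_def by (rule cosh_real_ge_1)
  have s0: "s \<ge> 0" unfolding s_def using assms by simp
  have sk: "s \<le> k" unfolding s_def k_def by (rule sinh_le_cosh_real)
  have "c * s * k / (1 + c * k^2) \<le> c * s * k / (1 + c * s^2)"
    using sk s0 k1 assms by (intro divide_left_mono add_left_mono mult_left_mono power_mono
        mult_pos_pos add_pos_nonneg) auto
  moreover have "c * s * k / (1 + c * k^2) = s / k - s / (k * (1 + c * k^2))"
  proof -
    have pos: "1 + c * k^2 > 0" "k > 0" using k1 assms by (simp_all add: add_pos_nonneg)
    then have "k * (1 + c * k^2) > 0" by simp
    then have "k + c * (k * (k * k)) > 0" by (simp add: algebra_simps power2_eq_square)
    with pos show ?thesis by (simp add: field_simps power2_eq_square)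
  qed
  moreover have "s / (k * (1 + c * k^2)) \<le> 1 / X"
  proof -
    have "s / (k * (1 + c * k^2)) \<le> k / (k * (1 + c * k^2))"
      using sk k1 assms by (intro divide_right_mono) (auto intro: add_nonneg_nonneg)
    also have "\<dots> = 1 / (1 + c * k^2)" using k1 by simp
    also have "\<dots> \<le> 1 / X" using assms by (intro divide_left_mono) (auto simp: k_def)
    finally show ?thesis .
  qed
  ultimately show ?thesis unfolding tanh_def Iterm'_def s_def[symmetric] k_def[symmetric] by linarith
qed

lemma Iterm''_eq:
  "Iterm'' c B = c * ((cosh (B / 2))^2 + (sinh (B / 2))^2 - c * (sinh (B / 2))^2)
     / (2 * (1 + c * (sinh (B / 2))^2)^2)"
  unfolding Iterm''_def using cosh_square_eq[of "B / 2"] by (simp add: algebra_simps power2_eq_square)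

lemma Iterm''_bounds:
  assumes "0 \<le> c" "c \<le> 1"
  shows "\<bar>Iterm'' c B\<bar> \<le> c * exp \<bar>B\<bar>" "c / (2 * exp (2 * \<bar>B\<bar>)) \<le> Iterm'' c B"
proof -
  define s where "s = sinh (B / 2)"
  define k where "k = cosh (B / 2)"
  have kk: "k^2 = s^2 + 1" unfolding s_def k_def by (rule cosh_square_eq)
  have d1: "1 + c * s^2 \<ge> 1" using assms by simp
  have F: "Iterm'' c B = c * (k^2 + s^2 - c * s^2) / (2 * (1 + c * s^2)^2)"
    unfolding Iterm''_eq s_def k_def ..
  have n0: "k^2 + s^2 - c * s^2 \<ge> k^2"
    using assms mult_right_mono[of c 1 "s^2"] by simp
  have dsq: "(1 + c * s^2)^2 \<ge> 1" using d1 by (simp add: one_le_power)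
  have "0 \<le> k^2 + s^2 - c * s^2" using n0 kk zero_le_power2[of s] by linarith
  then have num: "0 \<le> c * (k^2 + s^2 - c * s^2)" using assms by simp
  have "\<bar>Iterm'' c B\<bar> \<le> c * (k^2 + s^2 - c * s^2) / 2"
    unfolding F using num dsq by (simp add: divide_le_eq mult_le_cancel_left1)
  also have "\<dots> \<le> c * (exp \<bar>B\<bar> + exp \<bar>B\<bar>) / 2"
  proof -
    have "k^2 + s^2 - c * s^2 \<le> exp \<bar>B\<bar> + exp \<bar>B\<bar>"
      using cosh_half_square_le[of B] sinh_half_square_le[of B] assms
      unfolding s_def[symmetric] k_def[symmetric] by (smt (verit) mult_nonneg_nonneg zero_le_power2)
    then show ?thesis using assms by (intro divide_right_mono mult_left_mono) auto
  qed
  finally show "\<bar>Iterm'' c B\<bar> \<le> c * exp \<bar>B\<bar>" by simp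
  have "(1 + c * s^2)^2 \<le> (k^2)^2"
    using kk assms mult_right_mono[of c 1 "s^2"] by (intro power_mono) auto
  also have "\<dots> \<le> (exp \<bar>B\<bar>)^2"
    using cosh_half_square_le[of B] unfolding k_def[symmetric] by (intro power_mono) auto
  also have "\<dots> = exp (2 * \<bar>B\<bar>)" by (simp add: power2_eq_square flip: exp_add)
  finally have den: "(1 + c * s^2)^2 \<le> exp (2 * \<bar>B\<bar>)" .
  have "c / (2 * exp (2 * \<bar>B\<bar>)) \<le> c / (2 * (1 + c * s^2)^2)"
  proof (rule divide_left_mono)
    have "0 < 1 + c * s^2" using d1 by simp
    then show "0 < 2 * exp (2 * \<bar>B\<bar>) * (2 * (1 + c * s^2)^2)" by simp
  qed (use den assms in auto)
  also have "\<dots> \<le> c * (k^2 + s^2 - c * s^2) / (2 * (1 + c * s^2)^2)"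
  proof (rule divide_right_mono)
    have "1 \<le> k^2 + s^2 - c * s^2" using n0 kk zero_le_power2[of s] by linarith
    then show "c \<le> c * (k^2 + s^2 - c * s^2)" using assms by (simp add: mult_le_cancel_left1)
  qed simp
  finally show "c / (2 * exp (2 * \<bar>B\<bar>)) \<le> Iterm'' c B" unfolding F .
qed

lemma Iterm'_lipschitz:
  assumes "0 \<le> c" "c \<le> 1" "\<bar>t - B\<bar> \<le> 1"
  shows "\<bar>Iterm' c t - Iterm' c B\<bar> \<le> c * exp (\<bar>B\<bar> + 1) * \<bar>t - B\<bar>"
proof -
  have "norm (Iterm' c t - Iterm' c B) \<le> c * exp (\<bar>B\<bar> + 1) * norm (t - B)"
  proof (rule field_differentiable_bound[OF convex_closed_segment])
    fix z assume z: "z \<in> closed_segment B t"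
    show "(Iterm' c has_field_derivative Iterm'' c z) (at z within closed_segment B t)"
      by (rule has_field_derivative_at_within[OF Iterm'_has_real_derivative[OF assms(1)]])
    have "\<bar>z\<bar> \<le> \<bar>B\<bar> + 1" using segment_bound(1)[OF z] assms(3) by simp
    then have "c * exp \<bar>z\<bar> \<le> c * exp (\<bar>B\<bar> + 1)" using assms by (intro mult_left_mono) auto
    then show "norm (Iterm'' c z) \<le> c * exp (\<bar>B\<bar> + 1)"
      using Iterm''_bounds(1)[OF assms(1,2), of z] by simp
  qed auto
  then show ?thesis by simp
qed

lemma Iterm_taylor:
  assumes "0 \<le> c" "c \<le> 1" "\<bar>h\<bar> \<le> 1"
  shows "\<bar>Iterm c (B + h) - Iterm c B - h * Iterm' c B\<bar> \<le> c * exp (\<bar>B\<bar> + 1) * h^2"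
proof -
  define \<psi> where "\<psi> t = Iterm c t - t * Iterm' c B" for t
  have "norm (\<psi> (B + h) - \<psi> B) \<le> (c * exp (\<bar>B\<bar> + 1) * \<bar>h\<bar>) * norm ((B + h) - B)"
  proof (rule field_differentiable_bound[OF convex_closed_segment])
    fix t assume t: "t \<in> closed_segment B (B + h)"
    have "((\<lambda>t. t * Iterm' c B) has_real_derivative 1 * Iterm' c B) (at t)"
      by (intro derivative_eq_intros) auto
    then have "(\<psi> has_real_derivative Iterm' c t - 1 * Iterm' c B) (at t)"
      unfolding \<psi>_def by (intro DERIV_diff Iterm_has_real_derivative[OF assms(1)])
    then show "(\<psi> has_field_derivative Iterm' c t - Iterm' c B) (at t within closed_segment B (B + h))"
      by (simp add: has_field_derivative_at_within)
    have tB: "\<bar>t - B\<bar> \<le> \<bar>h\<bar>" using segment_bound(1)[OF t] by simp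
    have "\<bar>Iterm' c t - Iterm' c B\<bar> \<le> c * exp (\<bar>B\<bar> + 1) * \<bar>t - B\<bar>"
      using tB assms by (intro Iterm'_lipschitz) auto
    also have "\<dots> \<le> c * exp (\<bar>B\<bar> + 1) * \<bar>h\<bar>" using tB assms by (intro mult_left_mono) auto
    finally show "norm (Iterm' c t - Iterm' c B) \<le> c * exp (\<bar>B\<bar> + 1) * \<bar>h\<bar>" by simp
  qed auto
  moreover have "\<psi> (B + h) - \<psi> B = Iterm c (B + h) - Iterm c B - h * Iterm' c B"
    by (simp add: \<psi>_def algebra_simps)
  ultimately show ?thesis by (simp add: power2_eq_square abs_mult_self mult.assoc)
qed

section \<open>The derivative of I\<close>

definition erfc_prod :: "real \<Rightarrow> real" where
  "erfc_prod \<eta> = erfc \<eta> * erfc (- \<eta>)"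

lemma erfc_prod_nonneg: "erfc_prod \<eta> \<ge> 0"
  unfolding erfc_prod_def by (simp add: erfc_nonneg)

lemma erfc_prod_le_1: "erfc_prod \<eta> \<le> 1"
proof -
  have "erfc_prod \<eta> = 1 - (1 - erfc \<eta>)^2"
    unfolding erfc_prod_def erfc_minus by (simp add: power2_eq_square algebra_simps)
  then show ?thesis by simp
qed

lemma continuous_on_erfc_prod: "continuous_on S erfc_prod"
  unfolding erfc_prod_def[abs_def]
  by (intro continuous_intros continuous_on_erfc continuous_on_compose2[OF continuous_on_erfc]) auto

lemma erfc_prod_le_exp: assumes "\<eta> \<ge> 0" shows "erfc_prod \<eta> \<le> 4 * exp (1/4) * exp (- (\<eta>^2))"
proof -
  have "erfc_prod \<eta> \<le> erfc \<eta> * 2"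
    unfolding erfc_prod_def using erfc_le_2[of "- \<eta>"] erfc_nonneg[of \<eta>] by (intro mult_left_mono) auto
  also have "\<dots> \<le> 2 * exp (1/4) * exp (- (\<eta>^2)) * 2"
    using erfc_le_exp[OF assms] by (intro mult_right_mono) auto
  finally show ?thesis by simp
qed

lemma erfc_prod_ge_exp: assumes "\<eta> \<ge> 0" shows "erfc_prod \<eta> \<ge> exp (- ((\<eta> + 1)^2))"
proof -
  have "erfc (- \<eta>) \<ge> 1" using erfc_le_1[OF assms] erfc_minus[of \<eta>] by simp
  then have "erfc \<eta> * 1 \<le> erfc_prod \<eta>"
    unfolding erfc_prod_def using erfc_nonneg[of \<eta>] by (intro mult_left_mono) auto
  then show ?thesis using erfc_ge_exp[OF assms] by simp
qed

lemma Iterm_denominator_erfc_prod [simp]: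
  "0 < 1 + (sinh (B / 2))^2 * erfc_prod \<eta>" "0 < 1 + erfc_prod \<eta> * (sinh (B / 2))^2"
  "1 + (sinh (B / 2))^2 * erfc_prod \<eta> \<noteq> 0" "1 + erfc_prod \<eta> * (sinh (B / 2))^2 \<noteq> 0"
  using Iterm_denominator_pos[of "erfc_prod \<eta>" B] erfc_prod_nonneg[of \<eta>] by simp_all

lemma dominated_by_erfc_prod_integrable_on:
  fixes f :: "real \<Rightarrow> real"
  assumes "a \<ge> 0" "continuous_on {a..} f" "\<And>\<eta>. \<eta> \<ge> a \<Longrightarrow> \<bar>f \<eta>\<bar> \<le> M * erfc_prod \<eta>" "M \<ge> 0"
  shows "f integrable_on {a..}"
proof (rule continuous_dominated_integrable_on[where g="\<lambda>\<eta>. (M * 4 * exp (1/2)) * exp (- \<eta>)"])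
  fix x assume x: "x \<in> {a..}"
  have "\<bar>f x\<bar> \<le> M * erfc_prod x" using assms(3) x by simp
  also have "\<dots> \<le> M * (4 * exp (1/4) * exp (- (x^2)))"
    using x assms by (intro mult_left_mono erfc_prod_le_exp) auto
  also have "\<dots> \<le> M * (4 * exp (1/4) * (exp (1/4) * exp (- x)))"
    using assms by (intro mult_left_mono exp_minus_square_le) auto
  also have "\<dots> = M * 4 * exp (1/2) * exp (- x)" by (simp add: mult_ac flip: exp_add)
  finally show "\<bar>f x\<bar> \<le> M * 4 * exp (1/2) * exp (- x)" .
qed (use assms scaled_exp_minus_integrable_on_Ici in auto)

lemma erfc_prod_integrable_on: "a \<ge> 0 \<Longrightarrow> erfc_prod integrable_on {a..}"
  by (rule dominated_by_erfc_prod_integrable_on[where M=1])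
     (auto simp: continuous_on_erfc_prod erfc_prod_nonneg)

lemma Iterm_erfc_prod_integrable_on: "a \<ge> 0 \<Longrightarrow> (\<lambda>\<eta>. Iterm (erfc_prod \<eta>) B) integrable_on {a..}"
proof (rule dominated_by_erfc_prod_integrable_on[where M="exp \<bar>B\<bar>"])
  show "continuous_on {a..} (\<lambda>\<eta>. Iterm (erfc_prod \<eta>) B)"
    unfolding Iterm_def by (intro continuous_intros continuous_on_erfc_prod) simp
  show "\<bar>Iterm (erfc_prod \<eta>) B\<bar> \<le> exp \<bar>B\<bar> * erfc_prod \<eta>" for \<eta>
    using Iterm_bounds[OF erfc_prod_nonneg, of \<eta> B] by (simp add: mult.commute)
qed auto

lemma continuous_on_Iterm'_erfc_prod: "continuous_on S (\<lambda>\<eta>. Iterm' (erfc_prod \<eta>) B)"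
  unfolding Iterm'_def by (intro continuous_intros continuous_on_erfc_prod) simp

lemma Iterm'_erfc_prod_integrable_on: "a \<ge> 0 \<Longrightarrow> (\<lambda>\<eta>. Iterm' (erfc_prod \<eta>) B) integrable_on {a..}"
proof (rule dominated_by_erfc_prod_integrable_on[where M="exp \<bar>B\<bar>"])
  show "\<bar>Iterm' (erfc_prod \<eta>) B\<bar> \<le> exp \<bar>B\<bar> * erfc_prod \<eta>" for \<eta>
    using abs_Iterm'_le[OF erfc_prod_nonneg, of \<eta> B] by (simp add: mult.commute)
qed (auto simp: continuous_on_Iterm'_erfc_prod)

lemma integral_erfc_prod_pos: "integral {0..} erfc_prod > 0"
proof -
  have "integral {0..1} (\<lambda>\<eta>::real. exp (- 4)) \<le> integral {0..1} erfc_prod"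
  proof (rule integral_le)
    fix \<eta> :: real assume \<eta>: "\<eta> \<in> {0..1}"
    then have "(\<eta> + 1)^2 \<le> 2^2" by (intro power_mono) auto
    then have "exp (- 4) \<le> exp (- ((\<eta> + 1)^2))" by simp
    also have "\<dots> \<le> erfc_prod \<eta>" using \<eta> by (intro erfc_prod_ge_exp) auto
    finally show "exp (- 4) \<le> erfc_prod \<eta>" .
  qed (simp_all add: integrable_continuous_interval continuous_on_erfc_prod)
  also have "\<dots> \<le> integral {0..} erfc_prod"
  proof (rule integral_subset_le)
    show "erfc_prod integrable_on {0..1}"
      by (rule integrable_continuous_interval[OF continuous_on_erfc_prod])
  qed (simp_all add: erfc_prod_integrable_on erfc_prod_nonneg)
  finally have "integral {0..1} (\<lambda>\<eta>::real. exp (- 4)) \<le> integral {0..} erfc_prod" .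
  moreover have "integral {0..1} (\<lambda>\<eta>::real. exp (- 4)) = exp (- 4 :: real)" by simp
  ultimately show ?thesis using exp_gt_zero[of "- 4 :: real"] by linarith
qed

definition Ifun' :: "real \<Rightarrow> real" where
  "Ifun' B = integral {0..} (\<lambda>\<eta>. Iterm' (erfc_prod \<eta>) B)"

lemma Ifun_eq: "Ifun B = integral {0..} (\<lambda>\<eta>. Iterm (erfc_prod \<eta>) B)"
  unfolding Ifun_def Iterm_def erfc_prod_def by (simp add: mult.assoc)

lemma Ifun_taylor:
  assumes "\<bar>h\<bar> \<le> 1"
  shows "\<bar>Ifun (B + h) - Ifun B - h * Ifun' B\<bar> \<le> exp (\<bar>B\<bar> + 1) * integral {0..} erfc_prod * h^2"
proof -
  let ?r = "\<lambda>\<eta>. Iterm (erfc_prod \<eta>) (B + h) - Iterm (erfc_prod \<eta>) B - h * Iterm' (erfc_prod \<eta>) B"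
  have i: "(\<lambda>\<eta>. Iterm (erfc_prod \<eta>) (B + h)) integrable_on {0..}"
    "(\<lambda>\<eta>. Iterm (erfc_prod \<eta>) B) integrable_on {0..}"
    "(\<lambda>\<eta>. h * Iterm' (erfc_prod \<eta>) B) integrable_on {0..}"
    by (auto intro: Iterm_erfc_prod_integrable_on integrable_on_mult_right Iterm'_erfc_prod_integrable_on)
  have "integral {0..} ?r = Ifun (B + h) - Ifun B - h * Ifun' B"
    unfolding Ifun_eq Ifun'_def using i by (simp add: integral_diff integrable_diff)
  moreover have "norm (integral {0..} ?r) \<le> integral {0..} (\<lambda>\<eta>. (exp (\<bar>B\<bar> + 1) * h^2) * erfc_prod \<eta>)"
  proof (rule integral_norm_bound_integral)
    show "(\<lambda>\<eta>. (exp (\<bar>B\<bar> + 1) * h^2) * erfc_prod \<eta>) integrable_on {0..}"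
      by (intro integrable_on_mult_right erfc_prod_integrable_on) simp
    fix \<eta> :: real
    have "\<bar>?r \<eta>\<bar> \<le> erfc_prod \<eta> * exp (\<bar>B\<bar> + 1) * h^2"
      by (rule Iterm_taylor[OF erfc_prod_nonneg erfc_prod_le_1 assms])
    then show "norm (?r \<eta>) \<le> (exp (\<bar>B\<bar> + 1) * h^2) * erfc_prod \<eta>" by (simp add: mult_ac)
  qed (use i in \<open>auto intro: integrable_diff\<close>)
  ultimately show ?thesis using erfc_prod_integrable_on[of 0] by (simp add: mult_ac)
qed

lemma Ifun'_lipschitz:
  assumes "\<bar>h\<bar> \<le> 1"
  shows "\<bar>Ifun' (B + h) - Ifun' B\<bar> \<le> exp (\<bar>B\<bar> + 1) * integral {0..} erfc_prod * \<bar>h\<bar>"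
proof -
  let ?d = "\<lambda>\<eta>. Iterm' (erfc_prod \<eta>) (B + h) - Iterm' (erfc_prod \<eta>) B"
  have "integral {0..} ?d = Ifun' (B + h) - Ifun' B"
    unfolding Ifun'_def by (intro integral_diff Iterm'_erfc_prod_integrable_on) auto
  moreover have "norm (integral {0..} ?d) \<le> integral {0..} (\<lambda>\<eta>. (exp (\<bar>B\<bar> + 1) * \<bar>h\<bar>) * erfc_prod \<eta>)"
  proof (rule integral_norm_bound_integral)
    show "?d integrable_on {0..}" by (intro integrable_diff Iterm'_erfc_prod_integrable_on) auto
    show "(\<lambda>\<eta>. (exp (\<bar>B\<bar> + 1) * \<bar>h\<bar>) * erfc_prod \<eta>) integrable_on {0..}"
      by (intro integrable_on_mult_right erfc_prod_integrable_on) simp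
    fix \<eta> :: real
    have "\<bar>?d \<eta>\<bar> \<le> erfc_prod \<eta> * exp (\<bar>B\<bar> + 1) * \<bar>B + h - B\<bar>"
      by (rule Iterm'_lipschitz[OF erfc_prod_nonneg erfc_prod_le_1]) (use assms in simp)
    then show "norm (?d \<eta>) \<le> (exp (\<bar>B\<bar> + 1) * \<bar>h\<bar>) * erfc_prod \<eta>" by (simp add: mult_ac)
  qed
  ultimately show ?thesis using erfc_prod_integrable_on[of 0] by (simp add: mult_ac)
qed

lemma tendsto_mult_abs_at_0: "((\<lambda>h. E * \<bar>h\<bar>) \<longlongrightarrow> 0) (at (0::real))"
proof -
  have "((\<lambda>h. E * \<bar>h\<bar>) \<longlongrightarrow> E * \<bar>0\<bar>) (at (0::real))" by (intro tendsto_intros)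
  then show ?thesis by simp
qed

lemma isCont_if_locally_lipschitz:
  fixes f :: "real \<Rightarrow> real"
  assumes "\<And>h. \<bar>h\<bar> \<le> 1 \<Longrightarrow> \<bar>f (x + h) - f x\<bar> \<le> E * \<bar>h\<bar>"
  shows "isCont f x"
proof -
  have "\<forall>\<^sub>F h in at 0. norm (f (x + h) - f x) \<le> E * \<bar>h\<bar>"
    unfolding eventually_at by (rule exI[of _ 1]) (simp add: assms)
  then have "((\<lambda>h. f (x + h) - f x) \<longlongrightarrow> 0) (at 0)"
    using tendsto_mult_abs_at_0 by (rule Lim_null_comparison)
  then have "((\<lambda>h. f (x + h) - f x + f x) \<longlongrightarrow> 0 + f x) (at 0)" by (intro tendsto_intros)
  then show ?thesis unfolding isCont_iff by simp
qed

lemma has_real_derivative_if_quadratic_remainder: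
  fixes f :: "real \<Rightarrow> real"
  assumes "\<And>h. \<bar>h\<bar> \<le> 1 \<Longrightarrow> \<bar>f (x + h) - f x - h * d\<bar> \<le> E * h^2"
  shows "(f has_real_derivative d) (at x)"
proof -
  define q where "q h = (f (x + h) - f x) / h - d" for h
  have bound: "\<bar>q h\<bar> \<le> E * \<bar>h\<bar>" if h: "\<bar>h\<bar> \<le> 1" "h \<noteq> 0" for h
  proof -
    have "q h = (f (x + h) - f x - h * d) / h" using h by (simp add: q_def field_simps)
    then have "\<bar>q h\<bar> = \<bar>f (x + h) - f x - h * d\<bar> / \<bar>h\<bar>" by simp
    also have "\<dots> \<le> E * h^2 / \<bar>h\<bar>" using assms[OF h(1)] by (intro divide_right_mono) auto
    also have "\<dots> = E * \<bar>h\<bar>" using h by (cases "h \<ge> 0") (simp_all add: power2_eq_square)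
    finally show ?thesis .
  qed
  have "\<forall>\<^sub>F h in at 0. norm (q h) \<le> E * \<bar>h\<bar>"
    unfolding eventually_at by (rule exI[of _ 1]) (auto intro!: bound)
  then have "(q \<longlongrightarrow> 0) (at 0)"
    using tendsto_mult_abs_at_0 by (rule Lim_null_comparison)
  then have "((\<lambda>h. q h + d) \<longlongrightarrow> 0 + d) (at 0)" by (intro tendsto_intros)
  then show ?thesis unfolding DERIV_def q_def by simp
qed
lemma Ifun_has_real_derivative: "(Ifun has_real_derivative Ifun' B) (at B)"
  by (rule has_real_derivative_if_quadratic_remainder[OF Ifun_taylor])

lemma continuous_on_Ifun': "continuous_on S Ifun'"
  using isCont_if_locally_lipschitz[OF Ifun'_lipschitz] by (simp add: continuous_at_imp_continuous_on)

lemma Ifun'_0: "Ifun' 0 = 0"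
  unfolding Ifun'_def Iterm'_def by simp

lemma Ifun'_increment_ge:
  assumes "0 \<le> B1" "B1 < B2"
  shows "Ifun' B2 - Ifun' B1 \<ge> (B2 - B1) / (2 * exp (2 * B2)) * integral {0..} erfc_prod"
proof -
  let ?k = "(B2 - B1) / (2 * exp (2 * B2))"
  have "?k * erfc_prod \<eta> \<le> Iterm' (erfc_prod \<eta>) B2 - Iterm' (erfc_prod \<eta>) B1" for \<eta>
  proof -
    let ?c = "erfc_prod \<eta>"
    obtain z where z: "B1 < z" "z < B2" "Iterm' ?c B2 - Iterm' ?c B1 = (B2 - B1) * Iterm'' ?c z"
      using MVT2[OF assms(2) Iterm'_has_real_derivative[OF erfc_prod_nonneg]] by blast
    have "?c / (2 * exp (2 * B2)) \<le> ?c / (2 * exp (2 * \<bar>z\<bar>))"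
      using z assms erfc_prod_nonneg[of \<eta>] by (intro divide_left_mono mult_pos_pos) auto
    also have "\<dots> \<le> Iterm'' ?c z" by (rule Iterm''_bounds(2)[OF erfc_prod_nonneg erfc_prod_le_1])
    finally have "(B2 - B1) * (?c / (2 * exp (2 * B2))) \<le> (B2 - B1) * Iterm'' ?c z"
      using assms by (intro mult_left_mono) auto
    then show ?thesis using z by simp
  qed
  then have "integral {0..} (\<lambda>\<eta>. ?k * erfc_prod \<eta>) \<le>
      integral {0..} (\<lambda>\<eta>. Iterm' (erfc_prod \<eta>) B2 - Iterm' (erfc_prod \<eta>) B1)"
    by (intro integral_le integrable_on_mult_right erfc_prod_integrable_on integrable_diff
        Iterm'_erfc_prod_integrable_on) auto
  also have "\<dots> = Ifun' B2 - Ifun' B1"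
    unfolding Ifun'_def by (intro integral_diff Iterm'_erfc_prod_integrable_on) auto
  finally show ?thesis using erfc_prod_integrable_on[of 0] by simp
qed

lemma Ifun'_strict_mono_on: "0 \<le> B1 \<Longrightarrow> B1 < B2 \<Longrightarrow> Ifun' B1 < Ifun' B2"
  using Ifun'_increment_ge[of B1 B2] integral_erfc_prod_pos
  by (smt (verit) divide_pos_pos exp_gt_zero mult_pos_pos)

lemma integral_Iterm'_tail_le:
  assumes "B \<ge> 1"
  shows "integral {sqrt B..} (\<lambda>\<eta>. Iterm' (erfc_prod \<eta>) B) \<le> 4 * exp (1/4)"
proof -
  define r where "r = sqrt B"
  have r1: "r \<ge> 1" and rB: "r^2 = B" using assms by (simp_all add: r_def)
  define C where "C = 4 * exp (1/4) * exp r"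
  have C_int: "((\<lambda>\<eta>. C * exp (- 1 * \<eta>)) has_integral (C * (exp (- 1 * r) / 1))) {r..}"
    by (intro has_integral_mult_right has_integral_exp_minus_to_infinity) simp
  have "Iterm' (erfc_prod \<eta>) B \<le> C * exp (- 1 * \<eta>)" if \<eta>: "\<eta> \<ge> r" for \<eta>
  proof -
    have "Iterm' (erfc_prod \<eta>) B \<le> erfc_prod \<eta> * exp B"
      using abs_Iterm'_le[OF erfc_prod_nonneg, of \<eta> B] assms by simp
    also have "\<dots> \<le> (4 * exp (1/4) * exp (- (\<eta>^2))) * exp B"
      using erfc_prod_le_exp[of \<eta>] \<eta> r1 by (intro mult_right_mono) auto
    also have "\<dots> = 4 * exp (1/4) * exp (B - \<eta>^2)" by (simp add: exp_diff exp_minus field_simps)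
    also have "\<dots> \<le> 4 * exp (1/4) * exp (r + - 1 * \<eta>)"
    proof -
      have "(\<eta> - r) * (\<eta> + r) \<ge> (\<eta> - r) * 1" using \<eta> r1 by (intro mult_left_mono) auto
      then have "B - \<eta>^2 \<le> r + - 1 * \<eta>" unfolding rB[symmetric] by (simp add: power2_eq_square algebra_simps)
      then show ?thesis by simp
    qed
    also have "\<dots> = C * exp (- 1 * \<eta>)" by (simp add: C_def exp_add exp_diff exp_minus field_simps)
    finally show ?thesis .
  qed
  then have "integral {r..} (\<lambda>\<eta>. Iterm' (erfc_prod \<eta>) B) \<le> integral {r..} (\<lambda>\<eta>. C * exp (- 1 * \<eta>))"
    using C_int r1 by (intro integral_le Iterm'_erfc_prod_integrable_on) auto
  also have "\<dots> = 4 * exp (1/4)" using integral_unique[OF C_int] by (simp add: C_def flip: exp_add)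
  finally show ?thesis by (simp add: r_def)
qed

lemma Ifun'_le_sqrt:
  assumes "B \<ge> 1"
  shows "Ifun' B \<le> sqrt B + 4 * exp (1/4)"
proof -
  let ?F = "\<lambda>\<eta>. Iterm' (erfc_prod \<eta>) B"
  have r1: "sqrt B \<ge> 1" using assms by simp
  have "Ifun' B = integral {0..sqrt B} ?F + integral {sqrt B..} ?F"
    unfolding Ifun'_def using r1
    by (intro integral_Ici_split integrable_continuous_interval continuous_on_Iterm'_erfc_prod
        Iterm'_erfc_prod_integrable_on) auto
  moreover have "integral {0..sqrt B} ?F \<le> integral {0..sqrt B} (\<lambda>\<eta>. 1::real)"
    by (rule integral_le) (auto intro!: integrable_continuous_interval continuous_on_Iterm'_erfc_prod
        Iterm'_le_1 erfc_prod_nonneg erfc_prod_le_1)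
  ultimately show ?thesis using r1 integral_Iterm'_tail_le[OF assms] by simp
qed

lemma tanh_half_eq: "tanh (B / 2) = (exp B - 1) / (exp B + 1)" for B :: real
proof -
  have "tanh (B / 2) = tanh (ln (exp (B / 2)))" by simp
  also have "\<dots> = ((exp (B / 2))^2 - 1) / ((exp (B / 2))^2 + 1)" by (rule tanh_ln_real) simp
  also have "(exp (B / 2))^2 = exp B" by (simp flip: exp_of_nat_mult)
  finally show ?thesis .
qed

text \<open>On [0, sqrt(B - sqrt B) - 1] the weight satisfies erfc_prod eta * exp B \<ge> exp(sqrt B), so
  Iterm' is within 4 exp(-sqrt B) of tanh(B/2) there.\<close>

lemma Ifun'_ge:
  assumes "B \<ge> 4"
  shows "Ifun' B \<ge> (sqrt (B - sqrt B) - 1) * ((exp B - 1) / (exp B + 1) - 4 * exp (- sqrt B))"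
proof -
  define T where "T = sqrt (B - sqrt B) - 1"
  define K where "K = (exp B - 1) / (exp B + 1) - 4 * exp (- sqrt B)"
  have "sqrt 4 \<le> sqrt B" using assms by (rule real_sqrt_le_mono)
  then have s2: "2 \<le> sqrt B" by simp
  then have "sqrt B * 2 \<le> sqrt B * sqrt B" using assms by (intro mult_left_mono) simp_all
  moreover have "sqrt B * sqrt B = B" using assms by simp
  ultimately have BsB: "B - sqrt B \<ge> 1" using s2 by linarith
  then have T0: "T \<ge> 0" and T1: "(T + 1)^2 = B - sqrt B" by (simp_all add: T_def)
  let ?F = "\<lambda>\<eta>. Iterm' (erfc_prod \<eta>) B"
  have "K \<le> ?F \<eta>" if \<eta>: "\<eta> \<in> {0..T}" for \<eta>
  proof -
    have "(\<eta> + 1)^2 \<le> (T + 1)^2" using \<eta> by (intro power_mono) auto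
    then have "exp (sqrt B - B) \<le> exp (- ((\<eta> + 1)^2))" using T1 by simp
    also have "\<dots> \<le> erfc_prod \<eta>" using \<eta> by (intro erfc_prod_ge_exp) auto
    finally have c: "exp (sqrt B - B) \<le> erfc_prod \<eta>" .
    have "exp (sqrt B) / 4 = exp (sqrt B - B) * (exp B / 4)" by (simp add: exp_diff)
    also have "\<dots> \<le> erfc_prod \<eta> * (cosh (B / 2))^2"
      using c cosh_half_square_ge[of B] erfc_prod_nonneg[of \<eta>] by (intro mult_mono) auto
    finally have "tanh (B / 2) - 1 / (exp (sqrt B) / 4) \<le> ?F \<eta>"
      using c assms by (intro Iterm'_ge_tanh) (auto intro: less_le_trans[rotated])
    then show ?thesis by (simp add: K_def tanh_half_eq exp_minus field_simps)
  qed
  then have "integral {0..T} (\<lambda>\<eta>. K) \<le> integral {0..T} ?F"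
    by (intro integral_le integrable_continuous_interval continuous_on_Iterm'_erfc_prod) auto
  also have "\<dots> \<le> Ifun' B" unfolding Ifun'_def
    by (rule integral_subset_le)
       (use assms in \<open>auto intro: integrable_continuous_interval continuous_on_Iterm'_erfc_prod
         Iterm'_erfc_prod_integrable_on Iterm'_nonneg erfc_prod_nonneg\<close>)
  finally show ?thesis using T0 by (simp add: T_def K_def)
qed

section \<open>The quenched large deviation function\<close>

lemma Ifun'_asymptotics: "((\<lambda>B. Ifun' B / sqrt B) \<longlongrightarrow> 1) at_top"
proof (rule tendsto_sandwich)
  show "\<forall>\<^sub>F B in at_top.
      (sqrt (B - sqrt B) - 1) * ((exp B - 1) / (exp B + 1) - 4 * exp (- sqrt B)) / sqrt B \<le> Ifun' B / sqrt B"
    using eventually_ge_at_top[of 4] by eventually_elim (intro divide_right_mono Ifun'_ge, auto)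
  show "\<forall>\<^sub>F B in at_top. Ifun' B / sqrt B \<le> (sqrt B + 4 * exp (1/4)) / sqrt B"
    using eventually_ge_at_top[of 1] by eventually_elim (intro divide_right_mono Ifun'_le_sqrt, auto)
  show "((\<lambda>B::real. (sqrt (B - sqrt B) - 1) * ((exp B - 1) / (exp B + 1) - 4 * exp (- sqrt B)) / sqrt B)
      \<longlongrightarrow> 1) at_top"
    by real_asymp
  show "((\<lambda>B::real. (sqrt B + 4 * exp (1/4)) / sqrt B) \<longlongrightarrow> 1) at_top"
    by real_asymp
qed

lemma filterlim_Ifun'_at_top: "filterlim Ifun' at_top at_top"
proof (rule filterlim_at_top_mono)
  show "filterlim (\<lambda>B::real. (sqrt (B - sqrt B) - 1) * ((exp B - 1) / (exp B + 1) - 4 * exp (- sqrt B)))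
      at_top at_top"
    by real_asymp
  show "\<forall>\<^sub>F B in at_top. (sqrt (B - sqrt B) - 1) * ((exp B - 1) / (exp B + 1) - 4 * exp (- sqrt B)) \<le> Ifun' B"
    using eventually_ge_at_top[of 4] by eventually_elim (rule Ifun'_ge)
qed

lemma Ifun_asymptotics: "((\<lambda>B. Ifun B / (B * sqrt B)) \<longlongrightarrow> 2/3) at_top"
proof (rule lhospital_at_top_at_top[where f'=Ifun' and g'="\<lambda>B. 3/2 * sqrt B"])
  show "filterlim (\<lambda>B::real. B * sqrt B) at_top at_top" by real_asymp
  show "\<forall>\<^sub>F B in at_top. 3/2 * sqrt B \<noteq> 0"
    using eventually_gt_at_top[of 0] by eventually_elim simp
  show "\<forall>\<^sub>F B in at_top. (Ifun has_real_derivative Ifun' B) (at B)"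
    by (simp add: Ifun_has_real_derivative)
  show "\<forall>\<^sub>F B in at_top. ((\<lambda>B. B * sqrt B) has_real_derivative 3/2 * sqrt B) (at B)"
    using eventually_gt_at_top[of 0]
  proof eventually_elim
    case (elim B)
    then have "((\<lambda>B. B * sqrt B) has_real_derivative 1 * sqrt B + inverse (sqrt B) / 2 * B) (at B)"
      by (intro DERIV_mult DERIV_ident DERIV_real_sqrt)
    moreover have "inverse (sqrt B) / 2 * B = sqrt B / 2"
    proof -
      have s: "sqrt B * sqrt B = B" using elim by simp
      show ?thesis using elim by (subst (2) s[symmetric]) (simp add: field_simps)
    qed
    ultimately show ?case by simp
  qed
  have "((\<lambda>B. 2/3 * (Ifun' B / sqrt B)) \<longlongrightarrow> 2/3 * 1) at_top"
    by (intro tendsto_intros Ifun'_asymptotics)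
  moreover have "\<forall>\<^sub>F B in at_top. 2/3 * (Ifun' B / sqrt B) = Ifun' B / (3/2 * sqrt B)"
    using eventually_gt_at_top[of 0] by eventually_elim (simp add: field_simps)
  ultimately show "((\<lambda>B. Ifun' B / (3/2 * sqrt B)) \<longlongrightarrow> 2/3) at_top"
    by (simp add: Lim_transform_eventually)
qed

lemma Legendre_ratio_tendsto_1: "((\<lambda>B. 3 * (B * Ifun' B - Ifun B) / (Ifun' B)^3) \<longlongrightarrow> 1) at_top"
proof -
  define u where "u B = Ifun' B / sqrt B" for B
  define v where "v B = Ifun B / (B * sqrt B)" for B
  have "((\<lambda>B. 3 / (u B)^2 - 3 * v B / (u B)^3) \<longlongrightarrow> 3 / 1^2 - 3 * (2/3) / 1^3) at_top"
    unfolding u_def v_def by (intro tendsto_intros Ifun'_asymptotics Ifun_asymptotics) simp_all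
  then have "((\<lambda>B. 3 / (u B)^2 - 3 * v B / (u B)^3) \<longlongrightarrow> 1) at_top" by simp
  moreover have "\<forall>\<^sub>F B in at_top. 3 / (u B)^2 - 3 * v B / (u B)^3 = 3 * (B * Ifun' B - Ifun B) / (Ifun' B)^3"
    using eventually_gt_at_top[of 0]
  proof eventually_elim
    case (elim B)
    have d: "Ifun' B > 0" using Ifun'_strict_mono_on[of 0 B] elim by (simp add: Ifun'_0)
    define r where "r = sqrt B"
    have r: "r > 0" "B = r * r" using elim by (simp_all add: r_def)
    show ?case unfolding u_def v_def r_def[symmetric] using r d
      by (simp add: field_simps eval_nat_numeral)
  qed
  ultimately show ?thesis by (rule Lim_transform_eventually)
qed

lemma Ifun'_surjective: assumes "y \<ge> 0" shows "\<exists>B \<ge> 0. Ifun' B = y"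
proof -
  have "\<forall>\<^sub>F B in at_top. y \<le> Ifun' B \<and> 0 \<le> B"
    using filterlim_Ifun'_at_top eventually_ge_at_top[of 0]
    by (auto simp: filterlim_at_top intro: eventually_conj)
  then obtain M where "y \<le> Ifun' M" "M \<ge> 0"
    unfolding eventually_at_top_linorder by (meson order_refl)
  then have "\<exists>B. 0 \<le> B \<and> B \<le> M \<and> Ifun' B = y"
    using assms by (intro IVT') (auto simp: Ifun'_0 continuous_on_Ifun')
  then show ?thesis by blast
qed

definition phi_q_param :: "real \<Rightarrow> real \<Rightarrow> real" where
  "phi_q_param \<sigma> \<xi> = (THE B. B \<ge> 0 \<and> \<sigma> * deriv Ifun B = \<bar>\<xi>\<bar>)"

lemma phi_q_param:
  assumes "\<sigma> > 0"
  shows "phi_q_param \<sigma> \<xi> \<ge> 0" "\<sigma> * Ifun' (phi_q_param \<sigma> \<xi>) = \<bar>\<xi>\<bar>"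
proof -
  have deriv: "deriv Ifun B = Ifun' B" for B by (rule DERIV_imp_deriv[OF Ifun_has_real_derivative])
  obtain B where B: "B \<ge> 0" "Ifun' B = \<bar>\<xi>\<bar> / \<sigma>"
    using Ifun'_surjective[of "\<bar>\<xi>\<bar> / \<sigma>"] assms by auto
  have "\<exists>!B. B \<ge> 0 \<and> \<sigma> * deriv Ifun B = \<bar>\<xi>\<bar>"
  proof (rule ex1I[of _ B])
    show "B \<ge> 0 \<and> \<sigma> * deriv Ifun B = \<bar>\<xi>\<bar>" using B assms by (simp add: deriv)
    fix B' assume "B' \<ge> 0 \<and> \<sigma> * deriv Ifun B' = \<bar>\<xi>\<bar>"
    then have "B' \<ge> 0" "\<sigma> * Ifun' B' = \<sigma> * Ifun' B" using B assms by (auto simp: deriv)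
    then have "B' \<ge> 0" "Ifun' B' = Ifun' B" using assms by auto
    then show "B' = B"
      using Ifun'_strict_mono_on[of B' B] Ifun'_strict_mono_on[of B B'] B(1) by fastforce
  qed
  from theI'[OF this] show "phi_q_param \<sigma> \<xi> \<ge> 0" "\<sigma> * Ifun' (phi_q_param \<sigma> \<xi>) = \<bar>\<xi>\<bar>"
    unfolding phi_q_param_def by (simp_all add: deriv)
qed

lemma phi_q_eq: "phi_q \<rho> \<sigma> \<xi> = \<rho> * phi_q_param \<sigma> \<xi> * \<bar>\<xi>\<bar> - \<rho> * \<sigma> * Ifun (phi_q_param \<sigma> \<xi>)"
  unfolding phi_q_def phi_q_param_def Let_def ..

lemma filterlim_phi_q_param_at_infinity:
  assumes "\<sigma> > 0"
  shows "filterlim (phi_q_param \<sigma>) at_top at_infinity"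
  unfolding filterlim_at_top
proof
  fix Z :: real
  show "\<forall>\<^sub>F \<xi> in at_infinity. Z \<le> phi_q_param \<sigma> \<xi>"
    unfolding eventually_at_infinity
  proof (intro exI allI impI)
    fix \<xi> :: real assume \<xi>: "\<sigma> * Ifun' (max Z 0) + 1 \<le> norm \<xi>"
    show "Z \<le> phi_q_param \<sigma> \<xi>"
    proof (rule ccontr)
      assume "\<not> Z \<le> phi_q_param \<sigma> \<xi>"
      then have "Ifun' (phi_q_param \<sigma> \<xi>) < Ifun' (max Z 0)"
        using phi_q_param(1)[OF assms] by (intro Ifun'_strict_mono_on) auto
      then have "\<sigma> * Ifun' (phi_q_param \<sigma> \<xi>) < \<sigma> * Ifun' (max Z 0)" using assms by simp
      then show False using phi_q_param(2)[OF assms, of \<xi>] \<xi> by simp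
    qed
  qed
qed

lemma phi_q_asymptotics:
  assumes "\<rho> > 0" "\<sigma> > 0"
  shows "((\<lambda>\<xi>. phi_q \<rho> \<sigma> \<xi> / (\<rho> / (3 * \<sigma>^2) * \<bar>\<xi>\<bar>^3)) \<longlongrightarrow> 1) at_infinity"
proof -
  let ?B = "phi_q_param \<sigma>"
  have "((\<lambda>\<xi>. 3 * (?B \<xi> * Ifun' (?B \<xi>) - Ifun (?B \<xi>)) / (Ifun' (?B \<xi>))^3) \<longlongrightarrow> 1) at_infinity"
    by (rule filterlim_compose[OF Legendre_ratio_tendsto_1 filterlim_phi_q_param_at_infinity[OF assms(2)]])
  moreover have "\<forall>\<^sub>F \<xi> in at_infinity. 3 * (?B \<xi> * Ifun' (?B \<xi>) - Ifun (?B \<xi>)) / (Ifun' (?B \<xi>))^3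
      = phi_q \<rho> \<sigma> \<xi> / (\<rho> / (3 * \<sigma>^2) * \<bar>\<xi>\<bar>^3)"
    using eventually_nonzero_at_infinity
  proof eventually_elim
    case (elim \<xi>)
    have \<xi>: "\<bar>\<xi>\<bar> = \<sigma> * Ifun' (?B \<xi>)" using phi_q_param(2)[OF assms(2)] by simp
    then have "Ifun' (?B \<xi>) \<noteq> 0" using elim by auto
    then show ?case unfolding phi_q_eq \<xi> using assms by (simp add: field_simps eval_nat_numeral)
  qed
  ultimately show ?thesis by (rule Lim_transform_eventually)
qed

theorem mainTheorem6:
  fixes \<rho> \<sigma> :: real
  assumes "\<rho> > 0" and "\<sigma> > 0"
  shows "((\<lambda>\<xi>. phi_a \<rho> \<sigma> \<xi> / (\<rho> * \<bar>\<xi>\<bar>)) \<longlongrightarrow> 1) at_infinity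
       \<and> ((\<lambda>\<xi>. phi_q \<rho> \<sigma> \<xi> / (\<rho> / (3 * \<sigma>^2) * \<bar>\<xi>\<bar>^3)) \<longlongrightarrow> 1) at_infinity"
  using phi_a_asymptotics[OF assms] phi_q_asymptotics[OF assms] by blast

end
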